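(* Let $F\in\mathbb{C}[x,y,z]$ be an irreducible polynomial of degree $d$ such that none of its three first-order partial derivatives is identically zero. Then there is a variety $\mathcal{Y}_1\subset\mathbb{C}^2$ of dimension one with $\deg(\mathcal{Y}_1)=O(d^2)$ and $\mathcal{S}\subset\mathcal{Y}_1$, such that for every $(y_1,y_2)\in\mathbb{C}^2\setminus\mathcal{Y}_1$ the set $\gamma_{y_1,y_2}$ contains no line parallel to one of the coordinate axes.
   Context: $\mathrm{cl}$ denotes Zariski closure. For $(y,y')\in\mathbb{C}^2$, $\gamma_{y,y'}=\mathrm{cl}(\{(z,z'):\exists x,\ F(x,y,z)=F(x,y',z')=0\})\subset\mathbb{C}^2$ (coordinates $(z,z')$). Let $R=\{y_0\in\mathbb{C}: \exists x_0 \text{ with } F(x_0,y_0,z)\equiv0 \text{ in } z, \text{ or } \exists z_0 \text{ with } F(x,y_0,z_0)\equiv 0 \text{ in } x\}$ and $\mathcal{S}=R\times R$. Degree of a variety is the sum of the degrees of its irreducible components. Implied constant is absolute. *)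

theory Defs
  imports "HOL-Computational_Algebra.Polynomial"
begin

text \<open>Polynomials in C[x,y,z] are represented as nested univariate polynomials
  ((C[z])[y])[x]; polynomials in C[z,z'] as (C[z'])[z].\<close>

type_synonym poly3 = "complex poly poly poly"
type_synonym poly2 = "complex poly poly"

definition eval3 :: "poly3 \<Rightarrow> complex \<Rightarrow> complex \<Rightarrow> complex \<Rightarrow> complex" where
  "eval3 F x y z = poly (poly (poly F [:[:x:]:]) [:y:]) z"

definition eval2 :: "poly2 \<Rightarrow> complex \<times> complex \<Rightarrow> complex" where
  "eval2 p q = poly (poly p [:fst q:]) (snd q)"

definition total_degree3 :: "poly3 \<Rightarrow> nat" where
  "total_degree3 F = Max (insert 0 {i + j + k | i j k. coeff (coeff (coeff F i) j) k \<noteq> 0})"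

definition dx3 :: "poly3 \<Rightarrow> poly3" where "dx3 F = pderiv F"
definition dy3 :: "poly3 \<Rightarrow> poly3" where "dy3 F = map_poly pderiv F"
definition dz3 :: "poly3 \<Rightarrow> poly3" where "dz3 F = map_poly (map_poly pderiv) F"

definition zero_set2 :: "poly2 set \<Rightarrow> (complex \<times> complex) set" where
  "zero_set2 S = {q. \<forall>p\<in>S. eval2 p q = 0}"

definition algebraic2 :: "(complex \<times> complex) set \<Rightarrow> bool" where
  "algebraic2 V \<longleftrightarrow> (\<exists>S. V = zero_set2 S)"

definition zariski_cl :: "(complex \<times> complex) set \<Rightarrow> (complex \<times> complex) set" where
  "zariski_cl A = zero_set2 {p. \<forall>q\<in>A. eval2 p q = 0}"

definition irred_alg2 :: "(complex \<times> complex) set \<Rightarrow> bool" where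
  "irred_alg2 V \<longleftrightarrow> algebraic2 V \<and> V \<noteq> {} \<and>
     (\<forall>A B. algebraic2 A \<longrightarrow> algebraic2 B \<longrightarrow> V = A \<union> B \<longrightarrow> V = A \<or> V = B)"

definition irred_components2 :: "(complex \<times> complex) set \<Rightarrow> (complex \<times> complex) set set" where
  "irred_components2 V = {W. W \<subseteq> V \<and> irred_alg2 W \<and>
       (\<forall>W'. irred_alg2 W' \<longrightarrow> W \<subseteq> W' \<longrightarrow> W' \<subseteq> V \<longrightarrow> W' = W)}"

definition alg_dim2 :: "(complex \<times> complex) set \<Rightarrow> nat" where
  "alg_dim2 V = Sup {k. \<exists>c :: nat \<Rightarrow> (complex \<times> complex) set.
      (\<forall>i\<le>k. irred_alg2 (c i) \<and> c i \<subseteq> V) \<and> (\<forall>i<k. c i \<subset> c (Suc i))}"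

definition affine_sub2 :: "nat \<Rightarrow> (complex \<times> complex) set \<Rightarrow> bool" where
  "affine_sub2 m L \<longleftrightarrow>
     (m = 0 \<and> (\<exists>a. L = {a})) \<or>
     (m = 1 \<and> (\<exists>a b u v. (u, v) \<noteq> (0, 0) \<and> L = {(a + t * u, b + t * v) | t. True})) \<or>
     (m = 2 \<and> L = UNIV)"

definition irred_deg2 :: "(complex \<times> complex) set \<Rightarrow> nat" where
  "irred_deg2 V = Sup {card (V \<inter> L) | L. affine_sub2 (2 - alg_dim2 V) L \<and> finite (V \<inter> L)}"

definition var_deg2 :: "(complex \<times> complex) set \<Rightarrow> nat" where
  "var_deg2 V = (\<Sum>W\<in>irred_components2 V. irred_deg2 W)"

definition Rset :: "poly3 \<Rightarrow> complex set" where
  "Rset F = {y0. (\<exists>x0. poly (poly F [:[:x0:]:]) [:y0:] = 0) \<or>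
                 (\<exists>z0. map_poly (\<lambda>q. poly (poly q [:y0:]) z0) F = 0)}"

definition gamma :: "poly3 \<Rightarrow> complex \<Rightarrow> complex \<Rightarrow> (complex \<times> complex) set" where
  "gamma F y y' = zariski_cl {(z, z'). \<exists>x. eval3 F x y z = 0 \<and> eval3 F x y' z' = 0}"

definition contains_axis_parallel_line :: "(complex \<times> complex) set \<Rightarrow> bool" where
  "contains_axis_parallel_line A \<longleftrightarrow>
     (\<exists>c. {(c, t) | t. True} \<subseteq> A \<or> {(t, c) | t. True} \<subseteq> A)"

end

theory Submission
  imports Defs "HOL-Computational_Algebra.Field_as_Ring" "Subresultants.Subresultant_Gcd"
    "Jordan_Normal_Form.Determinant" "HOL-Computational_Algebra.Fundamental_Theorem_Algebra"
begin

(* A value y lies in R when a fibre of F over y contains a whole line x = x0 or z = z0.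
   Eliminating x between F and its specialisation F(x, y, c) at a generic z = c gives a resultant
   that is nonzero because F is irreducible and depends on z; one of its coefficients is a
   nonzero polynomial of degree at most 2 d^2 vanishing at every y of the first kind. Exchanging
   x and z handles the second kind, so |R| <= 4 d^2.
   For Y1 take the union of the vertical and horizontal lines through the points of R: its
   irreducible components are these lines, each of degree one.
   If y1, y2 are not in R, gamma lies in the zero set of P(z, z') = Res_x(F(x, y1, z), F(x, y2, z')).
   On a vertical line z = c, for generic t the polynomial F(x, y2, t) keeps its degree and has no
   root in common with the nonzero F(x, y1, c), so P(c, t) <> 0; horizontal lines follow by
   exchanging y1 and y2. *)

lemma comm_ring_hom_comp:
  assumes "comm_ring_hom f" "comm_ring_hom g"
  shows "comm_ring_hom (\<lambda>x. f (g x))"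
proof -
  interpret f: comm_ring_hom f by fact
  interpret g: comm_ring_hom g by fact
  show ?thesis by unfold_locales (auto simp: f.hom_add g.hom_add f.hom_mult g.hom_mult)
qed

lemma comm_ring_hom_map_poly:
  assumes "comm_ring_hom h"
  shows "comm_ring_hom (map_poly h)"
proof -
  interpret h: comm_ring_hom h by fact
  interpret map_poly_comm_ring_hom h ..
  show ?thesis by (rule comm_ring_hom_axioms)
qed

lemma comm_ring_hom_const_poly: "comm_ring_hom (\<lambda>a. [:a:])"
  by unfold_locales (auto simp: one_pCons)

lemma irreducible_involutive_hom_image:
  fixes f :: "'a::{comm_ring_1, algebraic_semidom} \<Rightarrow> 'a"
  assumes "comm_ring_hom f" and inv: "\<And>x. f (f x) = x" and "irreducible x"
  shows "irreducible (f x)"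
proof -
  interpret comm_ring_hom f by fact
  have dvd_iff: "f a dvd f b \<longleftrightarrow> a dvd b" for a b
    by (metis dvd_def hom_mult inv)
  have unit_iff: "is_unit (f a) \<longleftrightarrow> is_unit a" for a
    using dvd_iff[of a 1] by simp
  show ?thesis
  proof (rule irreducibleI)
    show "f x \<noteq> 0" "\<not> is_unit (f x)"
      using \<open>irreducible x\<close> unit_iff by (metis hom_zero inv irreducible_def)+
    fix a b assume "f x = a * b"
    then have "x = f a * f b" by (metis hom_mult inv)
    then show "is_unit a \<or> is_unit b"
      using \<open>irreducible x\<close> unit_iff by (auto simp: irreducible_def)
  qed
qed

definition eval_yz :: "'a::comm_ring_1 \<Rightarrow> 'a \<Rightarrow> 'a poly poly \<Rightarrow> 'a" where
  "eval_yz y z q = poly (poly q [:y:]) z"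

lemma comm_ring_hom_eval_yz: "comm_ring_hom (eval_yz y z)"
  unfolding eval_yz_def[abs_def] by (rule comm_ring_hom_comp[OF poly_hom.comm_ring_hom_axioms poly_hom.comm_ring_hom_axioms])

lemma eval3_eq_poly_map_eval_yz: "eval3 F x y z = poly (map_poly (eval_yz y z) F) x"
proof -
  interpret h: comm_ring_hom "eval_yz y z" by (rule comm_ring_hom_eval_yz)
  have "poly (map_poly (eval_yz y z) F) (eval_yz y z [:[:x:]:]) = eval_yz y z (poly F [:[:x:]:])"
    by (rule h.poly_map_poly)
  then show ?thesis
    by (simp add: eval3_def eval_yz_def)
qed

text \<open>Substituting the inner variable \<open>[:[:0, 1:]:]\<close> for the outer one, after lifting the
  coefficients, exchanges the two variables.\<close>

definition swap_vars2 :: "'a::comm_ring_1 poly poly \<Rightarrow> 'a poly poly" where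
  "swap_vars2 p = poly (map_poly (map_poly (\<lambda>a. [:a:])) p) [:[:0, 1:]:]"

lemma swap_vars2_pCons: "swap_vars2 (pCons c p) = map_poly (\<lambda>a. [:a:]) c + [:[:0, 1:]:] * swap_vars2 p"
  unfolding swap_vars2_def by (cases "c = 0 \<and> p = 0") (auto simp: map_poly_pCons)

lemma coeff_swap_vars2: "coeff (coeff (swap_vars2 p) j) k = coeff (coeff p k) j"
proof (induct p arbitrary: k)
  case 0
  then show ?case by (simp add: swap_vars2_def)
next
  case (pCons c p)
  then show ?case
    by (cases k) (simp_all add: swap_vars2_pCons coeff_map_poly)
qed

lemma swap_vars2_swap_vars2 [simp]: "swap_vars2 (swap_vars2 p) = p"
  by (intro poly_eqI) (simp add: coeff_swap_vars2)

lemma comm_ring_hom_swap_vars2: "comm_ring_hom (swap_vars2 :: 'a::comm_ring_1 poly poly \<Rightarrow> _)"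
  unfolding swap_vars2_def[abs_def]
  by (intro comm_ring_hom_comp[OF poly_hom.comm_ring_hom_axioms] comm_ring_hom_map_poly
      comm_ring_hom_const_poly)

lemma poly_swap_vars2: "poly (poly (swap_vars2 p) [:a:]) b = poly (poly p [:b:]) a"
proof (induct p)
  case 0
  then show ?case by (simp add: swap_vars2_def)
next
  case (pCons c p)
  have "poly (map_poly (\<lambda>a. [:a:]) c) [:a:] = [:poly c a:]"
    by (rule coeff_lift_hom.poly_map_poly)
  with pCons(2) show ?case by (simp add: swap_vars2_pCons)
qed

definition swap_xz :: "poly3 \<Rightarrow> poly3" where
  "swap_xz F = swap_vars2 (map_poly swap_vars2 (swap_vars2 F))"

lemma coeff_swap_xz: "coeff (coeff (coeff (swap_xz F) k) j) i = coeff (coeff (coeff F i) j) k"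
  unfolding swap_xz_def coeff_swap_vars2 by (simp add: coeff_map_poly coeff_swap_vars2 swap_vars2_def[of 0])

lemma swap_xz_swap_xz [simp]: "swap_xz (swap_xz F) = F"
  by (intro poly_eqI) (simp add: coeff_swap_xz)

lemma comm_ring_hom_swap_xz: "comm_ring_hom swap_xz"
  unfolding swap_xz_def[abs_def]
  by (rule comm_ring_hom_comp[OF comm_ring_hom_swap_vars2
        comm_ring_hom_comp[OF comm_ring_hom_map_poly[OF comm_ring_hom_swap_vars2] comm_ring_hom_swap_vars2]])

lemma irreducible_swap_xz: "irreducible F \<Longrightarrow> irreducible (swap_xz F)"
  by (rule irreducible_involutive_hom_image[OF comm_ring_hom_swap_xz swap_xz_swap_xz])

lemma eval3_swap_xz: "eval3 (swap_xz F) x y z = eval3 F z y x"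
proof -
  let ?H = "map_poly swap_vars2 (swap_vars2 F)"
  interpret h: comm_ring_hom "swap_vars2 :: complex poly poly \<Rightarrow> _" by (rule comm_ring_hom_swap_vars2)
  have const: "swap_vars2 [:[:y:]:] = [:[:y:]:]"
    by (intro poly_eqI) (simp add: coeff_swap_vars2 coeff_pCons split: nat.split)
  have "poly (poly (swap_xz F) [:[:x:]:]) [:y:] = poly (poly ?H [:[:y:]:]) [:x:]"
    unfolding swap_xz_def by (rule poly_swap_vars2)
  also have "poly ?H [:[:y:]:] = swap_vars2 (poly (swap_vars2 F) [:[:y:]:])"
    using h.poly_map_poly[of "swap_vars2 F" "[:[:y:]:]"] unfolding const .
  finally have "eval3 (swap_xz F) x y z = poly (poly (swap_vars2 (poly (swap_vars2 F) [:[:y:]:])) [:x:]) z"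
    unfolding eval3_def by simp
  also have "poly (poly (swap_vars2 (poly (swap_vars2 F) [:[:y:]:])) [:x:]) z
      = poly (poly (poly (swap_vars2 F) [:[:y:]:]) [:z:]) x"
    by (rule poly_swap_vars2)
  also have "poly (poly (swap_vars2 F) [:[:y:]:]) [:z:] = poly (poly F [:[:z:]:]) [:y:]"
    by (rule poly_swap_vars2)
  finally show ?thesis
    unfolding eval3_def .
qed

section \<open>Resultants and common roots\<close>

lemma sylvester_mat_sub_entry:
  fixes p q :: "'a::comm_ring_1 poly"
  assumes dp: "degree p \<le> m" and dq: "degree q \<le> n" and i: "i < m + n" and j: "j < m + n"
  shows "sylvester_mat_sub m n p q $$ (i, j) =
    (if i < n then coeff (monom 1 (n - 1 - i) * p) (m + n - 1 - j)
     else coeff (monom 1 (m + n - 1 - i) * q) (m + n - 1 - j))"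
  unfolding sylvester_mat_sub_index[OF i j] coeff_monom_mult
  apply (cases "i < n")
   apply (cases "i \<le> j \<and> j - i \<le> m")
  using i j dp dq apply (force, force simp: coeff_eq_0)
  apply (cases "i - n \<le> j \<and> j \<le> i")
  using i j dp dq coeff_eq_0[of q] by auto

lemma poly_eq_sum_rev_coeffs:
  fixes r :: "'a::comm_ring_1 poly"
  assumes "degree r < N"
  shows "(\<Sum>j<N. coeff r (N - 1 - j) * x ^ (N - 1 - j)) = poly r x"
proof -
  have "(\<Sum>j<N. coeff r (N - 1 - j) * x ^ (N - 1 - j)) = (\<Sum>k<N. coeff r k * x ^ k)"
    using sum.nat_diff_reindex[of "\<lambda>k. coeff r k * x ^ k" N] by (simp add: Suc_diff_Suc)
  also have "\<dots> = poly r x"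
    using assms by (simp add: poly_altdef lessThan_Suc_atMost[symmetric]
        sum.mono_neutral_right[of "{..<N}" "{..<Suc (degree r)}"] coeff_eq_0)
  finally show ?thesis .
qed

lemma sylvester_mat_sub_row_poly:
  fixes p q :: "'a::comm_ring_1 poly"
  assumes dp: "degree p \<le> m" and dq: "degree q \<le> n" and i: "i < m + n"
  shows "(\<Sum>j<m + n. sylvester_mat_sub m n p q $$ (i, j) * x ^ (m + n - 1 - j)) =
     (if i < n then x ^ (n - 1 - i) * poly p x else x ^ (m + n - 1 - i) * poly q x)"
proof -
  define r where "r = (if i < n then monom 1 (n - 1 - i) * p else monom 1 (m + n - 1 - i) * q)"
  have deg_monom_mult: "degree (monom (1::'a) k * s) \<le> k + degree s" for k s
    by (meson add_le_mono1 degree_monom_le degree_mult_le order_trans)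
  have "degree r < m + n"
    using deg_monom_mult[of "n - 1 - i" p] deg_monom_mult[of "m + n - 1 - i" q] dp dq i
    unfolding r_def by (cases "i < n") auto
  have "(\<Sum>j<m + n. sylvester_mat_sub m n p q $$ (i, j) * x ^ (m + n - 1 - j)) =
        (\<Sum>j<m + n. coeff r (m + n - 1 - j) * x ^ (m + n - 1 - j))"
    by (intro sum.cong refl) (simp add: sylvester_mat_sub_entry[OF dp dq i] r_def)
  also have "\<dots> = poly r x"
    by (rule poly_eq_sum_rev_coeffs) fact
  finally show ?thesis
    by (simp add: r_def poly_monom)
qed

text \<open>The vector of powers \<open>x^(m+n-1), \<dots>, x, 1\<close> of a common root lies in the kernel.\<close>

lemma resultant_sub_eq_0_if_common_root:
  fixes p q :: "'a::idom poly"
  assumes dp: "degree p \<le> m" and dq: "degree q \<le> n" and mn: "0 < m + n"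
    and "poly p x = 0" and "poly q x = 0"
  shows "resultant_sub m n p q = 0"
proof -
  let ?M = "sylvester_mat_sub m n p q"
  define v where "v = vec (m + n) (\<lambda>j. x ^ (m + n - 1 - j))"
  have v: "v \<in> carrier_vec (m + n)" unfolding v_def by simp
  have "v $ (m + n - 1) = 1" unfolding v_def using mn by simp
  then have "v \<noteq> 0\<^sub>v (m + n)"
    using mn by (intro notI) (simp add: vec_eq_iff)
  moreover have "?M *\<^sub>v v = 0\<^sub>v (m + n)"
  proof (rule eq_vecI)
    fix i assume "i < dim_vec (0\<^sub>v (m + n) :: 'a vec)"
    then have i: "i < m + n" by simp
    have "(?M *\<^sub>v v) $ i = (\<Sum>j<m + n. ?M $$ (i, j) * x ^ (m + n - 1 - j))"
      using i by (simp add: mult_mat_vec_def scalar_prod_def v_def lessThan_atLeast0)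
    also have "\<dots> = 0" using sylvester_mat_sub_row_poly[OF dp dq i] assms by simp
    finally show "(?M *\<^sub>v v) $ i = 0\<^sub>v (m + n) $ i" using i by simp
  qed simp
  ultimately show ?thesis
    unfolding resultant_sub_def using det_0_iff_vec_prod_zero[OF sylvester_mat_sub_carrier] v by blast
qed

lemma resultant_sub_map_poly:
  assumes "comm_ring_hom h"
  shows "h (resultant_sub m n p q) = resultant_sub m n (map_poly h p) (map_poly h q)"
proof -
  interpret comm_ring_hom h by fact
  show ?thesis unfolding resultant_sub_def hom_det[symmetric]
    by (subst sylvester_mat_sub_map) auto
qed

text \<open>A vector \<open>w\<close> in the left kernel of the Sylvester matrix lists the coefficients of two
  polynomials \<open>a\<close>, \<open>b\<close> with \<open>a p + b q = 0\<close>.\<close>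

lemma sylvester_mat_sub_left_kernel:
  fixes p q :: "'a::comm_ring_1 poly"
  assumes dp: "degree p \<le> m" and dq: "degree q \<le> n"
    and col: "\<And>j. j < m + n \<Longrightarrow> (\<Sum>i<m + n. sylvester_mat_sub m n p q $$ (i, j) * w i) = 0"
  shows "poly ((\<Sum>k<n. monom (w (n - 1 - k)) k) * p + (\<Sum>k<m. monom (w (n + (m - 1 - k))) k) * q) x = 0"
proof -
  let ?M = "sylvester_mat_sub m n p q"
  have rev: "(\<Sum>k<N. f (N - 1 - k) * x ^ k) = (\<Sum>i<N. f i * x ^ (N - 1 - i))" for N f
    by (rule sum.reindex_bij_witness[of _ "\<lambda>i. N - 1 - i" "\<lambda>i. N - 1 - i"]) auto
  have split: "(\<Sum>i<m + n. g i) = (\<Sum>i<n. g i) + (\<Sum>i<m. g (n + i))" for g :: "nat \<Rightarrow> 'a"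
    by (induct m) (simp_all add: add_ac)
  have "0 = (\<Sum>j<m + n. x ^ (m + n - 1 - j) * (\<Sum>i<m + n. ?M $$ (i, j) * w i))"
    using col by simp
  also have "\<dots> = (\<Sum>j<m + n. \<Sum>i<m + n. w i * (?M $$ (i, j) * x ^ (m + n - 1 - j)))"
    by (simp add: sum_distrib_left mult_ac)
  also have "\<dots> = (\<Sum>i<m + n. w i * (\<Sum>j<m + n. ?M $$ (i, j) * x ^ (m + n - 1 - j)))"
    by (subst sum.swap) (simp add: sum_distrib_left)
  also have "\<dots> = (\<Sum>i<m + n. w i *
      (if i < n then x ^ (n - 1 - i) * poly p x else x ^ (m + n - 1 - i) * poly q x))"
    by (intro sum.cong refl, subst sylvester_mat_sub_row_poly[OF dp dq]) auto
  also have "\<dots> = (\<Sum>i<n. w i * (x ^ (n - 1 - i) * poly p x))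
      + (\<Sum>i<m. w (n + i) * (x ^ (m - 1 - i) * poly q x))"
    by (subst split) (auto intro!: sum.cong)
  also have "\<dots> = poly (\<Sum>k<n. monom (w (n - 1 - k)) k) x * poly p x
      + poly (\<Sum>k<m. monom (w (n + (m - 1 - k))) k) x * poly q x"
    unfolding poly_sum poly_monom rev[where N = n and f = w] rev[where N = m and f = "\<lambda>i. w (n + i)"]
    by (simp add: sum_distrib_left sum_distrib_right mult_ac)
  finally show ?thesis by simp
qed

lemma resultant_sub_eq_0_imp_combination:
  fixes p q :: "'a::{idom, ring_char_0} poly"
  assumes dp: "degree p \<le> m" and dq: "degree q \<le> n" and res: "resultant_sub m n p q = 0"
  obtains a b where "a \<noteq> 0 \<or> b \<noteq> 0" "a \<noteq> 0 \<longrightarrow> degree a < n" "b \<noteq> 0 \<longrightarrow> degree b < m"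
    "a * p + b * q = 0"
proof -
  let ?M = "sylvester_mat_sub m n p q"
  have MT: "?M\<^sup>T \<in> carrier_mat (m + n) (m + n)"
    using sylvester_mat_sub_carrier by simp
  have "det (?M\<^sup>T) = 0"
    using det_transpose[OF sylvester_mat_sub_carrier[of m n p q]] res unfolding resultant_sub_def by simp
  then obtain w where w: "w \<in> carrier_vec (m + n)" "w \<noteq> 0\<^sub>v (m + n)" "?M\<^sup>T *\<^sub>v w = 0\<^sub>v (m + n)"
    using det_0_iff_vec_prod_zero[OF MT] by blast
  have col: "(\<Sum>i<m + n. ?M $$ (i, j) * w $ i) = 0" if "j < m + n" for j
  proof -
    have "(?M\<^sup>T *\<^sub>v w) $ j = (\<Sum>i<m + n. ?M $$ (i, j) * w $ i)"
      using that w(1) by (simp add: mult_mat_vec_def scalar_prod_def lessThan_atLeast0 col_def)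
    with w(3) that show ?thesis by simp
  qed
  define a where "a = (\<Sum>k<n. monom (w $ (n - 1 - k)) k)"
  define b where "b = (\<Sum>k<m. monom (w $ (n + (m - 1 - k))) k)"
  have coeff_a: "coeff a k = (if k < n then w $ (n - 1 - k) else 0)" for k
    by (simp add: a_def coeff_sum coeff_monom)
  have coeff_b: "coeff b k = (if k < m then w $ (n + (m - 1 - k)) else 0)" for k
    by (simp add: b_def coeff_sum coeff_monom)
  have "poly (a * p + b * q) x = 0" for x
    unfolding a_def b_def by (rule sylvester_mat_sub_left_kernel[OF dp dq col])
  then have comb: "a * p + b * q = 0" using poly_all_0_iff_0 by blast
  have nonzero: "a \<noteq> 0 \<or> b \<noteq> 0"
  proof -
    obtain i where i: "i < m + n" "w $ i \<noteq> 0" using w(1,2) by (auto simp: vec_eq_iff)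
    show ?thesis
    proof (cases "i < n")
      case True
      then have "coeff a (n - 1 - i) = w $ i" by (auto simp: coeff_a)
      then show ?thesis using i by auto
    next
      case False
      with i have "coeff b (m - 1 - (i - n)) = w $ i" by (auto simp: coeff_b)
      then show ?thesis using i by auto
    qed
  qed
  have "a \<noteq> 0 \<longrightarrow> degree a < n"
    using coeff_a[of "degree a"] by (cases "degree a < n") auto
  moreover have "b \<noteq> 0 \<longrightarrow> degree b < m"
    using coeff_b[of "degree b"] by (cases "degree b < m") auto
  ultimately show ?thesis by (rule that[OF nonzero _ _ comb])
qed

lemma coprime_if_no_common_root:
  fixes p q :: "complex poly"
  assumes "p \<noteq> 0" and no_root: "\<not> (\<exists>x. poly p x = 0 \<and> poly q x = 0)"
  shows "coprime p q"
proof -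
  have "degree (gcd p q) = 0"
  proof (rule ccontr)
    assume "degree (gcd p q) \<noteq> 0"
    then have "\<not> constant (poly (gcd p q))" by (simp add: constant_degree)
    then obtain z where "poly (gcd p q) z = 0"
      using fundamental_theorem_of_algebra by blast
    moreover have "gcd p q dvd p" "gcd p q dvd q" by auto
    ultimately have "poly p z = 0" "poly q z = 0"
      by (auto simp: poly_eq_0_iff_dvd dvd_trans)
    with no_root show False by blast
  qed
  then have "is_unit (gcd p q)"
    using \<open>p \<noteq> 0\<close> by (simp add: is_unit_iff_degree)
  then show ?thesis by (simp only: is_unit_gcd)
qed

lemma degree_le_if_coprime_combination:
  fixes p q a b :: "complex poly"
  assumes "coprime p q" and "a * p + b * q = 0" and "b \<noteq> 0"
  shows "degree p \<le> degree b"
proof -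
  have "b * q = - (a * p)" using assms(2) by (simp add: eq_neg_iff_add_eq_0 add.commute)
  then have "p dvd b * q" by simp
  with assms(1) have "p dvd b" by (simp add: coprime_dvd_mult_left_iff)
  then show ?thesis using assms(3) by (rule dvd_imp_degree_le)
qed

text \<open>Unlike \<open>resultant_0_gcd\<close>, the Sylvester matrix may be larger than the degrees require;
  it suffices that one of the two polynomials has full size.\<close>

lemma resultant_sub_nonzero_if_no_common_root:
  fixes p q :: "complex poly"
  assumes p0: "p \<noteq> 0" and q0: "q \<noteq> 0" and dp: "degree p \<le> m" and dq: "degree q \<le> n"
    and full: "degree p = m \<or> degree q = n"
    and no_root: "\<not> (\<exists>x. poly p x = 0 \<and> poly q x = 0)"
  shows "resultant_sub m n p q \<noteq> 0"
proof
  assume "resultant_sub m n p q = 0"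
  then obtain a b where ab: "a \<noteq> 0 \<or> b \<noteq> 0" "a \<noteq> 0 \<longrightarrow> degree a < n" "b \<noteq> 0 \<longrightarrow> degree b < m"
    "a * p + b * q = 0"
    by (rule resultant_sub_eq_0_imp_combination[OF dp dq])
  have cop: "coprime p q" using p0 no_root by (rule coprime_if_no_common_root)
  from full show False
  proof
    assume "degree p = m"
    have "b = 0"
    proof (rule ccontr)
      assume "b \<noteq> 0"
      with degree_le_if_coprime_combination[OF cop ab(4)] ab(3) \<open>degree p = m\<close> show False
        by simp
    qed
    then show False using ab p0 by simp
  next
    assume "degree q = n"
    have comb: "b * q + a * p = 0" using ab(4) by (simp add: add.commute)
    have "a = 0"
    proof (rule ccontr)
      assume "a \<noteq> 0"
      with degree_le_if_coprime_combination[OF cop[unfolded coprime_commute[of p]] comb] ab(2)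
        \<open>degree q = n\<close> show False
        by simp
    qed
    then show False using ab q0 by simp
  qed
qed

lemma degree_prod_le_card_mult:
  "(\<And>x. x \<in> A \<Longrightarrow> degree (f x :: 'a::comm_ring_1 poly) \<le> D) \<Longrightarrow> degree (prod f A) \<le> card A * D"
proof (induct A rule: infinite_finite_induct)
  case (insert x A)
  have "degree (prod f (insert x A)) = degree (f x * prod f A)" using insert by simp
  also have "\<dots> \<le> degree (f x) + degree (prod f A)" by (rule degree_mult_le)
  also have "\<dots> \<le> D + card A * D" using insert by (intro add_mono) auto
  finally show ?case using insert by simp
qed auto

lemma degree_of_int_mult_le: "degree (of_int k * p :: 'a::comm_ring_1 poly) \<le> degree p"
proof -
  have "of_int k * p = Polynomial.smult (of_int k) p" by (simp add: of_int_poly)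
  then show ?thesis by (simp add: degree_smult_le)
qed

lemma degree_det_le:
  fixes M :: "'a::comm_ring_1 poly mat"
  assumes M: "M \<in> carrier_mat N N"
    and entries: "\<And>i j. i < N \<Longrightarrow> j < N \<Longrightarrow> degree (M $$ (i, j)) \<le> D"
  shows "degree (det M) \<le> N * D"
  unfolding det_def'[OF M]
proof (rule degree_sum_le)
  fix \<pi> assume "\<pi> \<in> {\<pi>. \<pi> permutes {0..<N}}"
  then have "\<And>i. i < N \<Longrightarrow> \<pi> i < N" by (auto dest: permutes_in_image)
  then have "degree (\<Prod>i = 0..<N. M $$ (i, \<pi> i)) \<le> N * D"
    using degree_prod_le_card_mult[of "{0..<N}" "\<lambda>i. M $$ (i, \<pi> i)" D] entries by simp
  then show "degree (of_int (sign \<pi>) * (\<Prod>i = 0..<N. M $$ (i, \<pi> i))) \<le> N * D"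
    using degree_of_int_mult_le order_trans by blast
qed (intro finite_permutations finite_atLeastLessThan)


text \<open>Projecting the common zeros of \<open>A\<close> and \<open>B\<close> away from \<open>x\<close>: the resultant \<open>Q(y, z)\<close> vanishes
  wherever \<open>A(\<cdot>, y, z)\<close> and \<open>B(\<cdot>, y, z)\<close> share a root, and one of its coefficients in \<open>z\<close> is a
  nonzero polynomial in \<open>y\<close>.\<close>

lemma resultant_elimination:
  fixes A B :: poly3
  assumes res: "resultant A B \<noteq> 0" and dB: "1 \<le> degree B" and dA: "degree A \<le> d"
    and dB': "degree B \<le> d" and cA: "\<And>i. degree (coeff A i) \<le> d"
    and cB: "\<And>i. degree (coeff B i) \<le> d"
  obtains u where "u \<noteq> 0" "degree u \<le> 2 * d * d"
    "\<And>y. (\<And>z. \<exists>x. eval3 A x y z = 0 \<and> eval3 B x y z = 0) \<Longrightarrow> poly u y = 0"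
proof -
  define Q where "Q = resultant A B"
  have Q: "Q = resultant_sub (degree A) (degree B) A B"
    unfolding Q_def by (rule resultant_sub)
  have "degree Q \<le> (degree A + degree B) * d"
    unfolding Q_def resultant_def sylvester_mat_def
    by (rule degree_det_le[OF sylvester_mat_sub_carrier]) (simp add: sylvester_mat_sub_index cA cB)
  also have "\<dots> \<le> 2 * d * d" using dA dB' by (simp add: mult_le_mono1)
  finally have degQ: "degree Q \<le> 2 * d * d" .
  define l where "l = degree (lead_coeff Q)"
  define u where "u = map_poly (\<lambda>q. coeff q l) Q"
  have "coeff u (degree Q) = lead_coeff (lead_coeff Q)"
    by (simp add: u_def l_def coeff_map_poly)
  then have "u \<noteq> 0" using res Q_def by auto
  moreover have "degree u \<le> 2 * d * d"
    using degQ degree_map_poly_le order_trans unfolding u_def by blast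
  moreover have "poly u y = 0" if common: "\<And>z. \<exists>x. eval3 A x y z = 0 \<and> eval3 B x y z = 0" for y
  proof -
    have "poly (poly Q [:y:]) z = 0" for z
    proof -
      obtain x where x: "eval3 A x y z = 0" "eval3 B x y z = 0" using common by blast
      have "poly (poly Q [:y:]) z = resultant_sub (degree A) (degree B)
          (map_poly (eval_yz y z) A) (map_poly (eval_yz y z) B)"
        unfolding Q resultant_sub_map_poly[OF comm_ring_hom_eval_yz, symmetric] eval_yz_def ..
      also have "\<dots> = 0"
        using x dB by (intro resultant_sub_eq_0_if_common_root[of _ _ _ _ x] degree_map_poly_le)
          (auto simp: eval3_eq_poly_map_eval_yz)
      finally show ?thesis .
    qed
    then have "poly Q [:y:] = 0" using poly_all_0_iff_0 by blast
    moreover have "poly u y = coeff (poly Q [:y:]) l"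
      unfolding u_def by (induct Q) (simp_all add: map_poly_pCons)
    ultimately show ?thesis by simp
  qed
  ultimately show ?thesis using that by blast
qed

lemma le_total_degree3:
  assumes "coeff (coeff (coeff F i) j) k \<noteq> 0"
  shows "i + j + k \<le> total_degree3 F"
proof -
  let ?S = "{i + j + k | i j k. coeff (coeff (coeff F i) j) k \<noteq> 0}"
  define M2 where "M2 = (\<Sum>i\<le>degree F. degree (coeff F i))"
  define M3 where "M3 = (\<Sum>i\<le>degree F. \<Sum>j\<le>degree (coeff F i). degree (coeff (coeff F i) j))"
  have "?S \<subseteq> {..degree F + M2 + M3}"
  proof
    fix s assume "s \<in> ?S"
    then obtain i j k where s: "s = i + j + k" and c: "coeff (coeff (coeff F i) j) k \<noteq> 0" by blast
    then have "coeff F i \<noteq> 0" "coeff (coeff F i) j \<noteq> 0" by auto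
    then have i: "i \<le> degree F" and j: "j \<le> degree (coeff F i)"
      and k: "k \<le> degree (coeff (coeff F i) j)"
      using c le_degree by blast+
    have "degree (coeff F i) \<le> M2" unfolding M2_def using i by (intro member_le_sum) auto
    moreover have "degree (coeff (coeff F i) j) \<le> (\<Sum>j\<le>degree (coeff F i). degree (coeff (coeff F i) j))"
      using j by (intro member_le_sum) auto
    moreover have "(\<Sum>j\<le>degree (coeff F i). degree (coeff (coeff F i) j)) \<le> M3"
      unfolding M3_def using i
      by (intro member_le_sum[where f = "\<lambda>i. \<Sum>j\<le>degree (coeff F i). degree (coeff (coeff F i) j)"]) auto
    ultimately show "s \<in> {..degree F + M2 + M3}" using i j k s by auto
  qed
  then have "finite ?S" by (rule finite_subset) simp
  moreover have "i + j + k \<in> ?S" using assms by blast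
  ultimately show ?thesis
    unfolding total_degree3_def by (intro Max_ge) auto
qed

lemma total_degree3_swap_xz: "total_degree3 (swap_xz F) = total_degree3 F"
proof -
  have "{i + j + k | i j k. coeff (coeff (coeff (swap_xz F) i) j) k \<noteq> 0}
      = {i + j + k | i j k. coeff (coeff (coeff F i) j) k \<noteq> 0}"
    unfolding coeff_swap_xz by (metis (no_types, opaque_lifting) add.commute add.left_commute)
  then show ?thesis unfolding total_degree3_def by simp
qed

lemma degree_le_total_degree3: "degree F \<le> total_degree3 F"
proof (cases "F = 0")
  case False
  then obtain j where "coeff (lead_coeff F) j \<noteq> 0" by (metis leading_coeff_0_iff poly_eqI coeff_0)
  then obtain k where "coeff (coeff (lead_coeff F) j) k \<noteq> 0" by (metis coeff_0 poly_eqI)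
  then show ?thesis using le_total_degree3 by fastforce
qed simp

lemma degree_coeff_le_total_degree3: "degree (coeff F i) \<le> total_degree3 F"
proof (cases "coeff F i = 0")
  case False
  then obtain k where "coeff (lead_coeff (coeff F i)) k \<noteq> 0" by (metis leading_coeff_0_iff poly_eqI coeff_0)
  then show ?thesis using le_total_degree3 by fastforce
qed simp

lemma degree_pos_if_dx3_nonzero: "dx3 F \<noteq> 0 \<Longrightarrow> 1 \<le> degree F"
  unfolding dx3_def by (metis One_nat_def degree_pderiv_le less_one not_less pderiv_eq_0_iff)

lemma degree_swap_xz_pos_if_dz3_nonzero:
  assumes "dz3 F \<noteq> 0"
  shows "1 \<le> degree (swap_xz F)"
proof -
  obtain i j where "coeff (coeff (dz3 F) i) j \<noteq> 0" using assms by (metis coeff_0 poly_eqI)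
  then have "pderiv (coeff (coeff F i) j) \<noteq> 0" unfolding dz3_def by (simp add: coeff_map_poly)
  then have "degree (coeff (coeff F i) j) \<noteq> 0" using pderiv_eq_0_iff by blast
  then obtain k where k: "1 \<le> k" "coeff (coeff (coeff F i) j) k \<noteq> 0"
    by (metis leading_coeff_neq_0 degree_0 less_one not_less)
  then have "coeff (coeff (coeff (swap_xz F) k) j) i \<noteq> 0" by (simp add: coeff_swap_xz)
  then have "coeff (swap_xz F) k \<noteq> 0" by auto
  with k show ?thesis using le_degree order_trans by blast
qed

definition subst_z :: "complex \<Rightarrow> poly3 \<Rightarrow> poly3" where
  "subst_z c F = map_poly (map_poly (\<lambda>q. [:poly q c:])) F"

lemma coeff_subst_z: "coeff (coeff (subst_z c F) i) j = [:poly (coeff (coeff F i) j) c:]"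
  by (simp add: subst_z_def coeff_map_poly)

lemma eval3_subst_z: "eval3 (subst_z c F) x y z = eval3 F x y c"
proof -
  define h where "h = (\<lambda>q::complex poly. [:poly q c:])"
  interpret h: comm_ring_hom h
    unfolding h_def by (rule comm_ring_hom_comp[OF comm_ring_hom_const_poly poly_hom.comm_ring_hom_axioms])
  interpret hh: comm_ring_hom "map_poly h" by (rule comm_ring_hom_map_poly) unfold_locales
  have "map_poly h [:[:x:]:] = [:[:x:]:]" by (cases "x = 0") (simp_all add: h_def map_poly_pCons)
  then have "poly (subst_z c F) [:[:x:]:] = map_poly h (poly F [:[:x:]:])"
    unfolding subst_z_def h_def[symmetric] by (metis hh.poly_map_poly)
  moreover have "h [:y:] = [:y:]" by (simp add: h_def)
  then have "poly (map_poly h P) [:y:] = h (poly P [:y:])" for P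
    by (metis h.poly_map_poly)
  ultimately show ?thesis unfolding eval3_def by (simp add: h_def)
qed

lemma degree_subst_z_le: "degree (subst_z c F) \<le> degree F"
  unfolding subst_z_def by (rule degree_map_poly_le)

lemma degree_coeff_subst_z_le: "degree (coeff (subst_z c F) i) \<le> degree (coeff F i)"
  unfolding subst_z_def by (simp add: coeff_map_poly degree_map_poly_le)

lemma degree_swap_xz_subst_z: "degree (swap_xz (subst_z c F)) = 0"
proof -
  have "coeff (swap_xz (subst_z c F)) k = 0" if "k \<noteq> 0" for k
    using that by (intro poly_eqI) (simp add: coeff_swap_xz coeff_subst_z coeff_pCons split: nat.split)
  then have "degree (swap_xz (subst_z c F)) \<le> 0" by (intro degree_le) auto
  then show ?thesis by simp
qed

lemma subst_z_nonzero:
  assumes "F \<noteq> 0"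
  obtains c where "subst_z c F \<noteq> 0"
proof -
  obtain i j where "coeff (coeff F i) j \<noteq> 0" using assms by (metis coeff_0 poly_eqI)
  then obtain c where "poly (coeff (coeff F i) j) c \<noteq> 0" using poly_all_0_iff_0 by blast
  then have "coeff (coeff (subst_z c F) i) j \<noteq> 0" by (simp add: coeff_subst_z)
  then show ?thesis using that by fastforce
qed

section \<open>The exceptional set \<open>R\<close> is finite\<close>

definition Rx :: "poly3 \<Rightarrow> complex set" where
  "Rx F = {y. \<exists>x. \<forall>z. eval3 F x y z = 0}"

definition Rz :: "poly3 \<Rightarrow> complex set" where
  "Rz F = {y. \<exists>z. \<forall>x. eval3 F x y z = 0}"

lemma Rset_eq_Rx_Un_Rz: "Rset F = Rx F \<union> Rz F"
proof -
  have "poly (poly F [:[:x:]:]) [:y:] = 0 \<longleftrightarrow> (\<forall>z. eval3 F x y z = 0)" for x y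
    unfolding eval3_def using poly_all_0_iff_0 by blast
  moreover have "map_poly (\<lambda>q. poly (poly q [:y:]) z) F = 0 \<longleftrightarrow> (\<forall>x. eval3 F x y z = 0)" for y z
    unfolding eval3_eq_poly_map_eval_yz eval_yz_def[abs_def] using poly_all_0_iff_0 by blast
  ultimately show ?thesis unfolding Rset_def Rx_def Rz_def by blast
qed

lemma Rz_eq_Rx_swap_xz: "Rz F = Rx (swap_xz F)"
  unfolding Rx_def Rz_def eval3_swap_xz ..

lemma resultant_nonzero_if_not_dvd:
  fixes F A :: poly3
  assumes irr: "irreducible F" and "\<not> F dvd A"
  shows "resultant A F \<noteq> 0"
proof
  assume "resultant A F = 0"
  then have deg: "degree (gcd A F) \<noteq> 0" using resultant_0_gcd by blast
  have "gcd A F dvd F" by simp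
  then have "F dvd gcd A F \<or> is_unit (gcd A F)" using irr irreducibleD' by blast
  moreover have "\<not> is_unit (gcd A F)" using deg by (auto simp: is_unit_poly_iff)
  ultimately have "F dvd A" using gcd_dvd1 dvd_trans by blast
  with \<open>\<not> F dvd A\<close> show False ..
qed

text \<open>The proof eliminates \<open>x\<close> between \<open>F\<close> and \<open>F(x, y, c)\<close>, a polynomial of degree 0 in \<open>z\<close>
  which \<open>F\<close> therefore cannot divide.\<close>

lemma Rx_subset_roots:
  assumes irr: "irreducible F" and dx: "1 \<le> degree F" and dz: "1 \<le> degree (swap_xz F)"
    and dF: "degree F \<le> d" and cF: "\<And>i. degree (coeff F i) \<le> d"
  obtains u where "u \<noteq> 0" "degree u \<le> 2 * d * d" "Rx F \<subseteq> {y. poly u y = 0}"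
proof -
  interpret comm_ring_hom swap_xz by (rule comm_ring_hom_swap_xz)
  have "F \<noteq> 0" using irr by auto
  then obtain c where A0: "subst_z c F \<noteq> 0" by (rule subst_z_nonzero)
  let ?A = "subst_z c F"
  have "\<not> F dvd ?A"
  proof
    assume "F dvd ?A"
    then have "swap_xz F dvd swap_xz ?A" by (rule hom_dvd)
    moreover have "swap_xz ?A \<noteq> 0" using A0 by (metis swap_xz_swap_xz hom_zero)
    ultimately have "degree (swap_xz F) \<le> degree (swap_xz ?A)" by (rule dvd_imp_degree_le)
    with dz show False by (simp add: degree_swap_xz_subst_z)
  qed
  then have "resultant ?A F \<noteq> 0" by (rule resultant_nonzero_if_not_dvd[OF irr])
  then obtain u where u: "u \<noteq> 0" "degree u \<le> 2 * d * d"
    and vanish: "\<And>y. (\<And>z. \<exists>x. eval3 ?A x y z = 0 \<and> eval3 F x y z = 0) \<Longrightarrow> poly u y = 0"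
    using resultant_elimination[OF _ dx order_trans[OF degree_subst_z_le dF] dF
        order_trans[OF degree_coeff_subst_z_le cF] cF]
    by blast
  have "Rx F \<subseteq> {y. poly u y = 0}"
  proof
    fix y assume "y \<in> Rx F"
    then obtain x where "\<And>z. eval3 F x y z = 0" unfolding Rx_def by blast
    then have "poly u y = 0" by (intro vanish) (auto simp: eval3_subst_z)
    then show "y \<in> {y. poly u y = 0}" by simp
  qed
  with u that show ?thesis by blast
qed

lemma finite_card_le_if_subset_roots:
  fixes u :: "complex poly"
  assumes "u \<noteq> 0" and "S \<subseteq> {y. poly u y = 0}"
  shows "finite S" "card S \<le> degree u"
proof -
  have fin: "finite {y. poly u y = 0}" by (rule poly_roots_finite[OF assms(1)])
  then show "finite S" using assms(2) by (rule finite_subset[rotated])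
  have "card S \<le> card {y. poly u y = 0}" by (rule card_mono[OF fin assms(2)])
  also have "\<dots> \<le> degree u" by (rule card_poly_roots_bound[OF assms(1)])
  finally show "card S \<le> degree u" .
qed

lemma finite_Rset:
  assumes irr: "irreducible F" and dx: "dx3 F \<noteq> 0" and dz: "dz3 F \<noteq> 0"
  shows "finite (Rset F)" "card (Rset F) \<le> 4 * total_degree3 F ^ 2"
proof -
  let ?d = "total_degree3 F"
  have dx': "1 \<le> degree F" by (rule degree_pos_if_dx3_nonzero[OF dx])
  have dz': "1 \<le> degree (swap_xz F)" by (rule degree_swap_xz_pos_if_dz3_nonzero[OF dz])
  obtain u1 where u1: "u1 \<noteq> 0" "degree u1 \<le> 2 * ?d * ?d" "Rx F \<subseteq> {y. poly u1 y = 0}"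
    by (rule Rx_subset_roots[OF irr dx' dz' degree_le_total_degree3 degree_coeff_le_total_degree3])
  obtain u2 where u2: "u2 \<noteq> 0" "degree u2 \<le> 2 * ?d * ?d" "Rx (swap_xz F) \<subseteq> {y. poly u2 y = 0}"
    by (rule Rx_subset_roots[OF irreducible_swap_xz[OF irr] dz'])
      (use dx' degree_le_total_degree3[of "swap_xz F"] degree_coeff_le_total_degree3[of "swap_xz F"]
        in \<open>simp_all add: total_degree3_swap_xz\<close>)
  have R: "Rset F = Rx F \<union> Rx (swap_xz F)"
    by (simp add: Rset_eq_Rx_Un_Rz Rz_eq_Rx_swap_xz)
  show "finite (Rset F)"
    unfolding R using finite_card_le_if_subset_roots(1) u1 u2 by blast
  have "card (Rset F) \<le> card (Rx F) + card (Rx (swap_xz F))"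
    unfolding R by (rule card_Un_le)
  also have "\<dots> \<le> degree u1 + degree u2"
    using finite_card_le_if_subset_roots(2) u1 u2 by (meson add_mono)
  also have "\<dots> \<le> 4 * ?d ^ 2" using u1(2) u2(2) by (simp add: power2_eq_square)
  finally show "card (Rset F) \<le> 4 * ?d ^ 2" .
qed

section \<open>The curves \<open>\<gamma>\<close> outside \<open>R \<times> R\<close>\<close>

definition eval_coeffs :: "'a::comm_ring_1 \<Rightarrow> 'a poly poly \<Rightarrow> 'a poly" where
  "eval_coeffs t p = map_poly (\<lambda>q. poly q t) p"

lemma coeff_eval_coeffs: "coeff (eval_coeffs t p) i = poly (coeff p i) t"
  by (simp add: eval_coeffs_def coeff_map_poly)

lemma degree_eval_coeffs_le: "degree (eval_coeffs t p) \<le> degree p"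
  unfolding eval_coeffs_def by (rule degree_map_poly_le)

lemma degree_eval_coeffs:
  assumes "poly (lead_coeff p) t \<noteq> 0"
  shows "degree (eval_coeffs t p) = degree p"
  using assms degree_eval_coeffs_le[of t p] le_degree[of "eval_coeffs t p" "degree p"]
  by (simp add: coeff_eval_coeffs)

lemma poly_eval_coeffs: "poly (eval_coeffs t p) x = poly (poly p [:x:]) t"
  unfolding eval_coeffs_def using poly_hom.poly_map_poly[of t p "[:x:]"] by simp

text \<open>For generic \<open>t\<close> the specialisation of \<open>p(x, t)\<close> keeps its degree and avoids the roots of \<open>b\<close>,
  because each root \<open>\<alpha>\<close> of \<open>b\<close> excludes only the finitely many roots of \<open>p(\<alpha>, \<cdot>)\<close>.\<close>

lemma generic_eval_coeffs:
  fixes p :: "complex poly poly" and b :: "complex poly"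
  assumes "p \<noteq> 0" and "b \<noteq> 0" and nonzero: "\<And>\<alpha>. poly p [:\<alpha>:] \<noteq> 0"
  obtains t where "degree (eval_coeffs t p) = degree p"
    "\<not> (\<exists>x. poly b x = 0 \<and> poly (eval_coeffs t p) x = 0)"
proof -
  let ?bad = "{t. poly (lead_coeff p) t = 0} \<union> (\<Union>\<alpha>\<in>{\<alpha>. poly b \<alpha> = 0}. {t. poly (poly p [:\<alpha>:]) t = 0})"
  have "finite ?bad"
    using assms by (intro finite_UnI finite_UN_I poly_roots_finite) auto
  then obtain t where t: "t \<notin> ?bad" using ex_new_if_finite[OF infinite_UNIV_char_0] by blast
  then have "degree (eval_coeffs t p) = degree p" by (intro degree_eval_coeffs) blast
  moreover have "\<not> (\<exists>x. poly b x = 0 \<and> poly (eval_coeffs t p) x = 0)"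
    using t by (auto simp: poly_eval_coeffs)
  ultimately show ?thesis by (rule that)
qed

text \<open>\<open>slice_y F y\<close> is \<open>F(x, y, z)\<close> as a polynomial in \<open>x\<close> over \<open>C[z]\<close>.\<close>

definition slice_y :: "poly3 \<Rightarrow> complex \<Rightarrow> complex poly poly" where
  "slice_y F y = map_poly (\<lambda>q. poly q [:y:]) F"

lemma poly_eval_coeffs_slice_y: "poly (eval_coeffs z (slice_y F y)) x = eval3 F x y z"
  unfolding eval3_eq_poly_map_eval_yz eval_coeffs_def slice_y_def eval_yz_def
  by (subst map_poly_map_poly) (simp_all add: o_def)

lemma eval_coeffs_slice_y_nonzero:
  assumes "y \<notin> Rz F"
  shows "eval_coeffs z (slice_y F y) \<noteq> 0"
proof
  assume "eval_coeffs z (slice_y F y) = 0"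
  then have "eval3 F x y z = 0" for x
    using poly_eval_coeffs_slice_y[of z F y x] by simp
  with assms show False unfolding Rz_def by blast
qed

lemma poly_slice_y_nonzero:
  assumes "y \<notin> Rx F"
  shows "poly (slice_y F y) [:x:] \<noteq> 0"
proof
  assume "poly (slice_y F y) [:x:] = 0"
  then have "eval3 F x y z = 0" for z
    using poly_eval_coeffs_slice_y[of z F y x] by (simp add: poly_eval_coeffs)
  with assms show False unfolding Rx_def by blast
qed

text \<open>Embeddings of \<open>C[z][x]\<close> into \<open>C[z'][z][x]\<close> sending \<open>z\<close> to the outer, respectively the inner,
  variable of \<open>C[z'][z]\<close>; the resultant of \<open>F(x, y\<^sub>1, z)\<close> and \<open>F(x, y\<^sub>2, z')\<close> is then an element of
  \<open>poly2\<close>.\<close>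

definition lift_outer :: "complex poly poly \<Rightarrow> poly3" where
  "lift_outer p = map_poly (map_poly (\<lambda>a. [:a:])) p"

definition lift_inner :: "complex poly poly \<Rightarrow> poly3" where
  "lift_inner p = map_poly (\<lambda>b. [:b:]) p"

lemma eval2_resultant_sub_lift:
  "eval2 (resultant_sub m n (lift_outer p) (lift_inner q)) (z, z')
    = resultant_sub m n (eval_coeffs z p) (eval_coeffs z' q)"
proof -
  have outer: "map_poly (eval_yz z z') (lift_outer p) = eval_coeffs z p"
    unfolding lift_outer_def eval_coeffs_def
    by (subst map_poly_map_poly)
      (simp_all add: eval_yz_def o_def coeff_lift_hom.poly_map_poly)
  have inner: "map_poly (eval_yz z z') (lift_inner q) = eval_coeffs z' q"
    unfolding lift_inner_def eval_coeffs_def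
    by (subst map_poly_map_poly) (simp_all add: eval_yz_def o_def)
  show ?thesis
    unfolding eval2_def fst_conv snd_conv eval_yz_def[symmetric] outer[symmetric] inner[symmetric]
    by (rule resultant_sub_map_poly[OF comm_ring_hom_eval_yz])
qed

lemma zariski_cl_subset_zero_set:
  "(\<And>q. q \<in> A \<Longrightarrow> eval2 p q = 0) \<Longrightarrow> zariski_cl A \<subseteq> {q. eval2 p q = 0}"
  unfolding zariski_cl_def zero_set2_def by blast

lemma gamma_subset_resultant_zeros:
  assumes "degree (slice_y F y1) \<le> m" and "degree (slice_y F y2) \<le> n" and "0 < m + n"
  shows "gamma F y1 y2 \<subseteq>
    {q. eval2 (resultant_sub m n (lift_outer (slice_y F y1)) (lift_inner (slice_y F y2))) q = 0}"
  unfolding gamma_def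
proof (rule zariski_cl_subset_zero_set, clarify)
  fix z z' x assume "eval3 F x y1 z = 0" "eval3 F x y2 z' = 0"
  then show "eval2 (resultant_sub m n (lift_outer (slice_y F y1)) (lift_inner (slice_y F y2))) (z, z') = 0"
    unfolding eval2_resultant_sub_lift using assms
    by (intro resultant_sub_eq_0_if_common_root[of _ _ _ _ x]
        order_trans[OF degree_eval_coeffs_le]) (simp_all add: poly_eval_coeffs_slice_y)
qed

lemma eval2_swap_vars2: "eval2 (swap_vars2 p) q = eval2 p (prod.swap q)"
  by (cases q) (simp add: eval2_def poly_swap_vars2)

lemma mem_image_swap: "q \<in> prod.swap ` S \<longleftrightarrow> prod.swap q \<in> S"
proof
  assume "q \<in> prod.swap ` S"
  then obtain r where "r \<in> S" "q = prod.swap r" by blast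
  then show "prod.swap q \<in> S" by simp
next
  assume "prod.swap q \<in> S"
  then have "prod.swap (prod.swap q) \<in> prod.swap ` S" by (rule imageI)
  then show "q \<in> prod.swap ` S" by simp
qed

lemma zariski_cl_image_swap: "zariski_cl (prod.swap ` A) = prod.swap ` zariski_cl A"
proof -
  have "q \<in> zariski_cl (prod.swap ` A) \<longleftrightarrow> q \<in> prod.swap ` zariski_cl A" for q
    unfolding mem_image_swap
  proof
    assume q: "q \<in> zariski_cl (prod.swap ` A)"
    show "prod.swap q \<in> zariski_cl A"
      unfolding zariski_cl_def zero_set2_def mem_Collect_eq
    proof (intro ballI)
      fix p assume "p \<in> {p. \<forall>r\<in>A. eval2 p r = 0}"
      then have "\<forall>r\<in>prod.swap ` A. eval2 (swap_vars2 p) r = 0" by (auto simp: eval2_swap_vars2)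
      with q have "eval2 (swap_vars2 p) q = 0" unfolding zariski_cl_def zero_set2_def by blast
      then show "eval2 p (prod.swap q) = 0" by (simp add: eval2_swap_vars2)
    qed
  next
    assume q: "prod.swap q \<in> zariski_cl A"
    show "q \<in> zariski_cl (prod.swap ` A)"
      unfolding zariski_cl_def zero_set2_def mem_Collect_eq
    proof (intro ballI)
      fix p assume "p \<in> {p. \<forall>r\<in>prod.swap ` A. eval2 p r = 0}"
      then have "\<forall>r\<in>A. eval2 (swap_vars2 p) r = 0" by (auto simp: eval2_swap_vars2)
      with q have "eval2 (swap_vars2 p) (prod.swap q) = 0" unfolding zariski_cl_def zero_set2_def by blast
      then show "eval2 p q = 0" by (simp add: eval2_swap_vars2)
    qed
  qed
  then show ?thesis by blast
qed

lemma gamma_swap: "gamma F y2 y1 = prod.swap ` gamma F y1 y2"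
proof -
  have "{(z, z'). \<exists>x. eval3 F x y2 z = 0 \<and> eval3 F x y1 z' = 0}
      = prod.swap ` {(z, z'). \<exists>x. eval3 F x y1 z = 0 \<and> eval3 F x y2 z' = 0}"
    by (auto simp: mem_image_swap)
  then show ?thesis unfolding gamma_def by (simp only: zariski_cl_image_swap)
qed

text \<open>The size \<open>max 1 \<dots>\<close> only ensures \<open>0 < m + n\<close>, which \<open>resultant_sub_eq_0_if_common_root\<close>
  needs.\<close>

lemma no_vertical_line_in_gamma:
  assumes y1: "y1 \<notin> Rset F" and y2: "y2 \<notin> Rset F"
  shows "\<not> {(c, t) | t. True} \<subseteq> gamma F y1 y2"
proof
  assume line: "{(c, t) | t. True} \<subseteq> gamma F y1 y2"
  let ?p1 = "slice_y F y1" and ?p2 = "slice_y F y2"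
  let ?m = "max 1 (degree ?p1)" and ?n = "degree ?p2"
  have y1': "y1 \<notin> Rz F" and y2': "y2 \<notin> Rx F" "y2 \<notin> Rz F"
    using y1 y2 by (auto simp: Rset_eq_Rx_Un_Rz)
  have p1c: "eval_coeffs c ?p1 \<noteq> 0" by (rule eval_coeffs_slice_y_nonzero[OF y1'])
  have "?p2 \<noteq> 0"
    using eval_coeffs_slice_y_nonzero[OF y2'(2), of 0] by (auto simp: eval_coeffs_def)
  then obtain t where t: "degree (eval_coeffs t ?p2) = ?n"
      "\<not> (\<exists>x. poly (eval_coeffs c ?p1) x = 0 \<and> poly (eval_coeffs t ?p2) x = 0)"
    by (rule generic_eval_coeffs[OF _ p1c poly_slice_y_nonzero[OF y2'(1)]])
  have res: "resultant_sub ?m ?n (eval_coeffs c ?p1) (eval_coeffs t ?p2) \<noteq> 0"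
    using t degree_eval_coeffs_le[of c ?p1]
    by (intro resultant_sub_nonzero_if_no_common_root p1c eval_coeffs_slice_y_nonzero[OF y2'(2)])
      auto
  have "(c, t) \<in> gamma F y1 y2" using line by blast
  moreover have "gamma F y1 y2 \<subseteq>
      {q. eval2 (resultant_sub ?m ?n (lift_outer ?p1) (lift_inner ?p2)) q = 0}"
    by (rule gamma_subset_resultant_zeros) auto
  ultimately have "eval2 (resultant_sub ?m ?n (lift_outer ?p1) (lift_inner ?p2)) (c, t) = 0"
    by blast
  with res show False unfolding eval2_resultant_sub_lift by simp
qed

lemma no_axis_parallel_line_in_gamma:
  assumes "y1 \<notin> Rset F" and "y2 \<notin> Rset F"
  shows "\<not> contains_axis_parallel_line (gamma F y1 y2)"
proof
  assume "contains_axis_parallel_line (gamma F y1 y2)"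
  then obtain c where "{(c, t) | t. True} \<subseteq> gamma F y1 y2 \<or> {(t, c) | t. True} \<subseteq> gamma F y1 y2"
    unfolding contains_axis_parallel_line_def by blast
  then show False
  proof
    assume "{(t, c) | t. True} \<subseteq> gamma F y1 y2"
    then have "{(c, t) | t. True} \<subseteq> gamma F y2 y1"
      unfolding gamma_swap[of F y1 y2] by (auto simp: mem_image_swap)
    with no_vertical_line_in_gamma[OF assms(2,1)] show False ..
  qed (use no_vertical_line_in_gamma[OF assms] in blast)
qed

section \<open>Algebraic subsets of \<open>C\<^sup>2\<close>\<close>

lemma eval2_mult: "eval2 (p * q) x = eval2 p x * eval2 q x"
proof -
  interpret h: comm_ring_hom "eval_yz (fst x) (snd x)" by (rule comm_ring_hom_eval_yz)
  show ?thesis unfolding eval2_def eval_yz_def[symmetric] by (rule h.hom_mult)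
qed

lemma algebraic2_zero_set2: "algebraic2 (zero_set2 S)"
  by (auto simp: algebraic2_def)

lemma algebraic2_Int:
  assumes "algebraic2 A" "algebraic2 B"
  shows "algebraic2 (A \<inter> B)"
proof -
  obtain S T where "A = zero_set2 S" "B = zero_set2 T" using assms by (auto simp: algebraic2_def)
  then have "A \<inter> B = zero_set2 (S \<union> T)" by (auto simp: zero_set2_def)
  then show ?thesis by (simp add: algebraic2_zero_set2)
qed

lemma algebraic2_Un:
  assumes "algebraic2 A" "algebraic2 B"
  shows "algebraic2 (A \<union> B)"
proof -
  obtain S T where ST: "A = zero_set2 S" "B = zero_set2 T" using assms by (auto simp: algebraic2_def)
  have "A \<union> B = zero_set2 {s * t | s t. s \<in> S \<and> t \<in> T}"
  proof
    show "A \<union> B \<subseteq> zero_set2 {s * t | s t. s \<in> S \<and> t \<in> T}"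
      using ST by (auto simp: zero_set2_def eval2_mult)
    show "zero_set2 {s * t | s t. s \<in> S \<and> t \<in> T} \<subseteq> A \<union> B"
    proof
      fix x assume x: "x \<in> zero_set2 {s * t | s t. s \<in> S \<and> t \<in> T}"
      show "x \<in> A \<union> B"
      proof (rule ccontr)
        assume "x \<notin> A \<union> B"
        then obtain s t where "s \<in> S" "t \<in> T" "eval2 s x \<noteq> 0" "eval2 t x \<noteq> 0"
          using ST by (auto simp: zero_set2_def)
        moreover have "eval2 (s * t) x = 0" using x \<open>s \<in> S\<close> \<open>t \<in> T\<close> by (auto simp: zero_set2_def)
        ultimately show False by (simp add: eval2_mult)
      qed
    qed
  qed
  then show ?thesis by (simp add: algebraic2_zero_set2)
qed

lemma algebraic2_Union: "finite I \<Longrightarrow> (\<And>A. A \<in> I \<Longrightarrow> algebraic2 A) \<Longrightarrow> algebraic2 (\<Union>I)"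
proof (induct I rule: finite_induct)
  case empty
  have "zero_set2 {1} = {}" by (auto simp: zero_set2_def eval2_def)
  then show ?case using algebraic2_zero_set2[of "{1}"] by simp
qed (simp add: algebraic2_Un)

definition x_minus :: "complex \<Rightarrow> poly2" where "x_minus r = [:[:-r:], [:1:]:]"
definition y_minus :: "complex \<Rightarrow> poly2" where "y_minus r = [:[:-r, 1:]:]"

lemma eval2_x_minus [simp]: "eval2 (x_minus r) (x, y) = x - r"
  by (simp add: eval2_def x_minus_def)

lemma eval2_y_minus [simp]: "eval2 (y_minus r) (x, y) = y - r"
  by (simp add: eval2_def y_minus_def)

lemma algebraic2_singleton: "algebraic2 {p}"
proof -
  have "{p} = zero_set2 {x_minus (fst p), y_minus (snd p)}"
    by (auto simp: zero_set2_def)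
  then show ?thesis by (simp add: algebraic2_zero_set2)
qed

lemma algebraic2_finite: "finite A \<Longrightarrow> algebraic2 A"
proof (induct A rule: finite_induct)
  case empty
  then show ?case using algebraic2_Union[of "{}"] by simp
next
  case (insert p A)
  then show ?case using algebraic2_Un[OF algebraic2_singleton[of p]] by simp
qed

lemma irred_alg2_singleton: "irred_alg2 {p}"
  unfolding irred_alg2_def
proof (intro conjI allI impI)
  fix A B assume "{p} = A \<union> B"
  then show "{p} = A \<or> {p} = B" using Un_singleton_iff[of A B p] by auto
qed (simp_all add: algebraic2_singleton)

lemma irred_alg2_nonempty: "irred_alg2 W \<Longrightarrow> W \<noteq> {}"
  by (simp add: irred_alg2_def)

lemma irred_alg2_finite_imp_singleton:
  assumes W: "irred_alg2 W" and "finite W"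
  obtains p where "W = {p}"
proof -
  obtain a where a: "a \<in> W" using irred_alg2_nonempty[OF W] by blast
  have "W = {a} \<union> (W - {a})" using a by auto
  moreover have "algebraic2 {a}" by (rule algebraic2_singleton)
  moreover have "algebraic2 (W - {a})" using \<open>finite W\<close> by (intro algebraic2_finite) simp
  ultimately have "W = {a} \<or> W = W - {a}" using W unfolding irred_alg2_def by blast
  then have "W = {a}" using a by blast
  then show ?thesis by (rule that)
qed

lemma irred_alg2_subset_Union:
  assumes "finite I" and "\<And>A. A \<in> I \<Longrightarrow> algebraic2 A"
    and W: "irred_alg2 W" and "W \<subseteq> \<Union>I"
  shows "\<exists>A\<in>I. W \<subseteq> A"
  using assms(1,2,4)
proof (induct I rule: finite_induct)
  case empty
  then show ?case using irred_alg2_nonempty[OF W] by simp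
next
  case (insert A I)
  have W': "algebraic2 W" using W by (simp add: irred_alg2_def)
  have "algebraic2 (W \<inter> A)" using insert(4) W' by (intro algebraic2_Int) auto
  moreover have "algebraic2 (W \<inter> \<Union>I)" using insert W' by (intro algebraic2_Int algebraic2_Union) auto
  moreover have "W = (W \<inter> A) \<union> (W \<inter> \<Union>I)" using insert(5) by auto
  ultimately have "W = W \<inter> A \<or> W = W \<inter> \<Union>I" using W unfolding irred_alg2_def by blast
  then show ?case
  proof
    assume "W = W \<inter> A"
    then show ?thesis by blast
  next
    assume "W = W \<inter> \<Union>I"
    then have "W \<subseteq> \<Union>I" by blast
    then show ?thesis using insert by blast
  qed
qed

definition vline :: "complex \<Rightarrow> (complex \<times> complex) set" where
  "vline r = {(r, t) | t. True}"

definition hline :: "complex \<Rightarrow> (complex \<times> complex) set" where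
  "hline r = {(t, r) | t. True}"

definition axis_line :: "(complex \<times> complex) set \<Rightarrow> bool" where
  "axis_line L \<longleftrightarrow> (\<exists>r. L = vline r) \<or> (\<exists>r. L = hline r)"

lemma mem_vline [simp]: "(x, y) \<in> vline r \<longleftrightarrow> x = r"
  by (auto simp: vline_def)

lemma mem_hline [simp]: "(x, y) \<in> hline r \<longleftrightarrow> y = r"
  by (auto simp: hline_def)

lemma algebraic2_axis_line: "axis_line L \<Longrightarrow> algebraic2 L"
proof -
  have "vline r = zero_set2 {x_minus r}" "hline r = zero_set2 {y_minus r}" for r
    by (auto simp: zero_set2_def vline_def hline_def)
  then show "axis_line L \<Longrightarrow> algebraic2 L"
    unfolding axis_line_def by (auto simp: algebraic2_zero_set2)
qed

lemma axis_line_param: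
  assumes "axis_line L"
  obtains \<phi> where "inj \<phi>" "L = range \<phi>" "\<And>p. \<exists>u. \<forall>t. eval2 p (\<phi> t) = poly u t"
proof -
  consider r where "L = vline r" | r where "L = hline r" using assms unfolding axis_line_def by blast
  then show ?thesis
  proof cases
    case 1
    have "inj (\<lambda>t. (r, t))" by (simp add: inj_on_def)
    moreover have "L = range (\<lambda>t. (r, t))" using 1 by (auto simp: vline_def)
    moreover have "\<forall>t. eval2 p (r, t) = poly (poly p [:r:]) t" for p by (simp add: eval2_def)
    then have "\<exists>u. \<forall>t. eval2 p (r, t) = poly u t" for p by blast
    ultimately show ?thesis by (rule that)
  next
    case 2
    have "inj (\<lambda>t. (t, r))" by (simp add: inj_on_def)
    moreover have "L = range (\<lambda>t. (t, r))" using 2 by (auto simp: hline_def)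
    moreover have "eval2 p (t, r) = poly (map_poly (\<lambda>q. poly q r) p) t" for p t
      using poly_hom.poly_map_poly[of r p "[:t:]"] by (simp add: eval2_def)
    then have "\<exists>u. \<forall>t. eval2 p (t, r) = poly u t" for p by blast
    ultimately show ?thesis by (rule that)
  qed
qed

lemma infinite_axis_line:
  assumes "axis_line L"
  shows "infinite L"
proof -
  obtain \<phi> :: "complex \<Rightarrow> complex \<times> complex" where "inj \<phi>" "L = range \<phi>"
    using axis_line_param[OF assms] by blast
  then show ?thesis using infinite_UNIV_char_0 finite_imageD by blast
qed

lemma axis_line_subset_imp_eq:
  assumes "axis_line L" "axis_line L'" "L \<subseteq> L'"
  shows "L = L'"
proof -
  from assms(2) obtain s where L': "L' = vline s \<or> L' = hline s" unfolding axis_line_def by blast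
  from assms(1) consider r where "L = vline r" | r where "L = hline r"
    unfolding axis_line_def by blast
  then show ?thesis
  proof cases
    case 1
    then have "(r, 0) \<in> L'" "(r, 1) \<in> L'" using assms(3) by auto
    with L' 1 show ?thesis by (elim disjE) simp_all
  next
    case 2
    then have "(0, r) \<in> L'" "(1, r) \<in> L'" using assms(3) by auto
    with L' 2 show ?thesis by (elim disjE) simp_all
  qed
qed

lemma axis_line_subset_or_finite_Int:
  assumes L: "axis_line L" and A: "algebraic2 A"
  shows "L \<subseteq> A \<or> finite (A \<inter> L)"
proof (cases "L \<subseteq> A")
  case False
  obtain \<phi> where \<phi>: "inj \<phi>" "L = range \<phi>" "\<And>p. \<exists>u. \<forall>t. eval2 p (\<phi> t) = poly u t"
    using axis_line_param[OF L] by blast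
  obtain S where S: "A = zero_set2 S" using A by (auto simp: algebraic2_def)
  obtain t0 where "\<phi> t0 \<notin> A" using False \<phi>(2) by blast
  then obtain p where p: "p \<in> S" "eval2 p (\<phi> t0) \<noteq> 0" using S by (auto simp: zero_set2_def)
  obtain u where u: "\<And>t. eval2 p (\<phi> t) = poly u t" using \<phi>(3) by blast
  have "u \<noteq> 0" using u p(2) by auto
  have "A \<inter> L \<subseteq> \<phi> ` {t. poly u t = 0}"
  proof
    fix q assume "q \<in> A \<inter> L"
    then obtain t where t: "q = \<phi> t" "q \<in> A" using \<phi>(2) by auto
    then have "eval2 p q = 0" using S p(1) by (auto simp: zero_set2_def)
    then show "q \<in> \<phi> ` {t. poly u t = 0}" using t u by auto
  qed
  moreover have "finite (\<phi> ` {t. poly u t = 0})" using poly_roots_finite[OF \<open>u \<noteq> 0\<close>] by simp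
  ultimately show ?thesis by (simp add: finite_subset)
qed simp

lemma irred_alg2_axis_line:
  assumes L: "axis_line L"
  shows "irred_alg2 L"
  unfolding irred_alg2_def
proof (intro conjI allI impI)
  show "algebraic2 L" by (rule algebraic2_axis_line[OF L])
  show "L \<noteq> {}" using infinite_axis_line[OF L] by auto
  fix A B assume "algebraic2 A" "algebraic2 B" and eq: "L = A \<union> B"
  then have "L \<subseteq> A \<or> finite (A \<inter> L)" "L \<subseteq> B \<or> finite (B \<inter> L)"
    using axis_line_subset_or_finite_Int[OF L] by blast+
  moreover have "A \<inter> L = A" "B \<inter> L = B" using eq by auto
  ultimately show "L = A \<or> L = B" using eq infinite_axis_line[OF L] by auto
qed

lemma irred_alg2_subset_axis_line:
  assumes L: "axis_line L" and W: "irred_alg2 W" and "W \<subseteq> L"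
  shows "(\<exists>p. W = {p}) \<or> W = L"
proof -
  have "L \<subseteq> W \<or> finite (W \<inter> L)"
    using W by (intro axis_line_subset_or_finite_Int[OF L]) (simp add: irred_alg2_def)
  then show ?thesis
  proof
    assume "L \<subseteq> W"
    then show ?thesis using \<open>W \<subseteq> L\<close> by blast
  next
    assume "finite (W \<inter> L)"
    then have "finite W" using \<open>W \<subseteq> L\<close> by (simp add: Int_absorb2)
    then obtain p where "W = {p}" by (rule irred_alg2_finite_imp_singleton[OF W])
    then show ?thesis by blast
  qed
qed

text \<open>In a strict chain a point can only be followed by a line, and a line by nothing.\<close>

lemma irred_chain_length_le_1:
  assumes curves: "\<And>W. irred_alg2 W \<Longrightarrow> W \<subseteq> V \<Longrightarrow> (\<exists>p. W = {p}) \<or> axis_line W"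
    and c: "\<forall>i\<le>k. irred_alg2 (c i) \<and> c i \<subseteq> V" "\<forall>i<k. c i \<subset> c (Suc i)"
  shows "k \<le> 1"
proof (rule ccontr)
  assume "\<not> k \<le> 1"
  then have c01: "c 0 \<subset> c 1" and c12: "c 1 \<subset> c 2" using c(2) by (auto simp: numeral_2_eq_2)
  have irr: "irred_alg2 (c i)" "c i \<subseteq> V" if "i \<le> 2" for i
    using c(1) that \<open>\<not> k \<le> 1\<close> by auto
  have "\<not> (\<exists>p. c 1 = {p})"
    using c01 irred_alg2_nonempty[OF irr(1)[of 0]] by (auto simp: subset_singleton_iff)
  moreover have "irred_alg2 (c 1)" "c 1 \<subseteq> V" using irr[of 1] by simp_all
  ultimately have line1: "axis_line (c 1)" using curves by blast
  then have "infinite (c 2)" using c12 infinite_axis_line finite_subset by blast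
  then have "\<not> (\<exists>p. c 2 = {p})" by auto
  moreover have "irred_alg2 (c 2)" "c 2 \<subseteq> V" using irr[of 2] by simp_all
  ultimately have "axis_line (c 2)" using curves by blast
  then have "c 1 = c 2" using axis_line_subset_imp_eq[OF line1] c12 by blast
  with c12 show False by simp
qed

lemma alg_dim2_eq_1:
  assumes curves: "\<And>W. irred_alg2 W \<Longrightarrow> W \<subseteq> V \<Longrightarrow> (\<exists>p. W = {p}) \<or> axis_line W"
    and L: "axis_line L" "L \<subseteq> V"
  shows "alg_dim2 V = 1"
proof -
  let ?K = "{k. \<exists>c :: nat \<Rightarrow> (complex \<times> complex) set.
      (\<forall>i\<le>k. irred_alg2 (c i) \<and> c i \<subseteq> V) \<and> (\<forall>i<k. c i \<subset> c (Suc i))}"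
  have "L \<noteq> {}" using infinite_axis_line[OF L(1)] by auto
  then obtain p where p: "p \<in> L" by blast
  have "{p} \<subset> L" using p infinite_axis_line[OF L(1)] by auto
  then have "1 \<in> ?K" using irred_alg2_singleton irred_alg2_axis_line[OF L(1)] L(2) p
    by (intro CollectI exI[of _ "\<lambda>i::nat. if i = 0 then {p} else L"]) (auto simp: le_Suc_eq)
  moreover have "k \<le> 1" if "k \<in> ?K" for k
    using that irred_chain_length_le_1[OF curves] by blast
  ultimately have "Sup ?K = 1" by (intro cSup_eq_maximum) auto
  then show ?thesis unfolding alg_dim2_def .
qed

lemma alg_dim2_axis_line: "axis_line L \<Longrightarrow> alg_dim2 L = 1"
  using irred_alg2_subset_axis_line by (intro alg_dim2_eq_1) auto

text \<open>A line meets an axis-parallel line \<open>L\<close> in the points whose parameters are the roots of a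
  polynomial of degree at most one.\<close>

lemma card_axis_line_Int_line_le_1:
  assumes L: "axis_line L" and uv: "(u, v) \<noteq> (0, 0)"
    and fin: "finite (L \<inter> {(a + t * u, b + t * v) | t. True})"
  shows "card (L \<inter> {(a + t * u, b + t * v) | t. True}) \<le> 1"
proof -
  define \<phi> where "\<phi> t = (a + t * u, b + t * v)" for t :: complex
  have "inj \<phi>"
  proof (rule injI)
    fix s t assume "\<phi> s = \<phi> t"
    then have "(s - t) * u = 0" "(s - t) * v = 0" by (simp_all add: \<phi>_def algebra_simps)
    with uv show "s = t" by auto
  qed
  have M: "{(a + t * u, b + t * v) | t. True} = range \<phi>" by (auto simp: \<phi>_def)
  have img: "L \<inter> range \<phi> = \<phi> ` {t. \<phi> t \<in> L}" by auto
  obtain l :: "complex poly" where deg: "degree l \<le> 1" and on_L: "\<And>t. \<phi> t \<in> L \<longleftrightarrow> poly l t = 0"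
  proof -
    consider r where "L = vline r" | r where "L = hline r" using L unfolding axis_line_def by blast
    then show ?thesis
    proof cases
      case 1
      have "a + t * u = r \<longleftrightarrow> a - r + t * u = 0" for t
        by (subst eq_iff_diff_eq_0) (simp add: algebra_simps)
      then show ?thesis using 1 by (intro that[of "[:a - r, u:]"]) (simp_all add: \<phi>_def)
    next
      case 2
      have "b + t * v = r \<longleftrightarrow> b - r + t * v = 0" for t
        by (subst eq_iff_diff_eq_0) (simp add: algebra_simps)
      then show ?thesis using 2 by (intro that[of "[:b - r, v:]"]) (simp_all add: \<phi>_def)
    qed
  qed
  have eq: "L \<inter> range \<phi> = \<phi> ` {t. poly l t = 0}" unfolding img on_L ..
  have "l \<noteq> 0"
  proof
    assume "l = 0"
    then have "L \<inter> range \<phi> = range \<phi>" using eq by simp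
    moreover have "infinite (range \<phi>)" using \<open>inj \<phi>\<close> infinite_UNIV_char_0 finite_imageD by blast
    ultimately show False using fin unfolding M by simp
  qed
  have "card (\<phi> ` {t. poly l t = 0}) \<le> card {t. poly l t = 0}"
    by (rule card_image_le[OF poly_roots_finite[OF \<open>l \<noteq> 0\<close>]])
  also have "\<dots> \<le> degree l" by (rule card_poly_roots_bound[OF \<open>l \<noteq> 0\<close>])
  finally show ?thesis unfolding M eq using deg by simp
qed

lemma irred_deg2_axis_line:
  assumes L: "axis_line L"
  shows "irred_deg2 L = 1"
proof -
  let ?D = "{card (L \<inter> M) | M. affine_sub2 (2 - alg_dim2 L) M \<and> finite (L \<inter> M)}"
  have line: "affine_sub2 (2 - alg_dim2 L) M \<longleftrightarrow>
      (\<exists>a b u v. (u, v) \<noteq> (0, 0) \<and> M = {(a + t * u, b + t * v) | t. True})" for M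
    unfolding alg_dim2_axis_line[OF L] affine_sub2_def by simp
  have "\<exists>M. affine_sub2 (2 - alg_dim2 L) M \<and> L \<inter> M = {q}" if "q \<in> L" for q
  proof -
    from L consider r where "L = vline r" | r where "L = hline r" unfolding axis_line_def by blast
    then show ?thesis
    proof cases
      case 1
      let ?M = "{(0 + t * 1, snd q + t * 0) | t :: complex. True}"
      have "affine_sub2 (2 - alg_dim2 L) ?M"
        unfolding line by (intro exI[of _ 0] exI[of _ "snd q"] exI[of _ 1] exI[of _ 0]) simp
      moreover have "L \<inter> ?M = {q}" using 1 that by (cases q) auto
      ultimately show ?thesis by blast
    next
      case 2
      let ?M = "{(fst q + t * 0, 0 + t * 1) | t :: complex. True}"
      have "affine_sub2 (2 - alg_dim2 L) ?M"
        unfolding line by (intro exI[of _ "fst q"] exI[of _ 0] exI[of _ 0] exI[of _ 1]) simp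
      moreover have "L \<inter> ?M = {q}" using 2 that by (cases q) auto
      ultimately show ?thesis by blast
    qed
  qed
  moreover obtain q where "q \<in> L" using infinite_axis_line[OF L] by (metis finite.emptyI ex_in_conv)
  ultimately obtain M where M: "affine_sub2 (2 - alg_dim2 L) M" "L \<inter> M = {q}" by blast
  then have "1 = card (L \<inter> M) \<and> affine_sub2 (2 - alg_dim2 L) M \<and> finite (L \<inter> M)" by simp
  then have "1 \<in> ?D" by blast
  moreover have "k \<le> 1" if "k \<in> ?D" for k
    using that card_axis_line_Int_line_le_1[OF L] unfolding line by blast
  ultimately have "Sup ?D = 1" by (intro cSup_eq_maximum) auto
  then show ?thesis unfolding irred_deg2_def .
qed

section \<open>The variety \<open>\<Y>\<^sub>1\<close>\<close>

definition axis_lines :: "complex set \<Rightarrow> (complex \<times> complex) set set" where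
  "axis_lines R = vline ` R \<union> hline ` R"

lemma axis_line_axis_lines: "L \<in> axis_lines R \<Longrightarrow> axis_line L"
  by (auto simp: axis_lines_def axis_line_def)

lemma finite_axis_lines: "finite R \<Longrightarrow> finite (axis_lines R)"
  by (simp add: axis_lines_def)

lemma mem_Union_axis_lines: "(a, b) \<in> \<Union>(axis_lines R) \<longleftrightarrow> a \<in> R \<or> b \<in> R"
  by (auto simp: axis_lines_def)

lemma irred_subset_Union_axis_lines:
  assumes "finite R" and W: "irred_alg2 W" and "W \<subseteq> \<Union>(axis_lines R)"
  obtains L where "L \<in> axis_lines R" "(\<exists>p. W = {p}) \<or> W = L"
proof -
  have "\<exists>L\<in>axis_lines R. W \<subseteq> L"
    using assms algebraic2_axis_line[OF axis_line_axis_lines]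
    by (intro irred_alg2_subset_Union[OF finite_axis_lines]) auto
  then obtain L where L: "L \<in> axis_lines R" "W \<subseteq> L" by blast
  then show ?thesis
    using irred_alg2_subset_axis_line[OF axis_line_axis_lines[OF L(1)] W] that by blast
qed

lemma irred_components2_Union_axis_lines:
  assumes R: "finite R"
  shows "irred_components2 (\<Union>(axis_lines R)) = axis_lines R"
proof
  show "irred_components2 (\<Union>(axis_lines R)) \<subseteq> axis_lines R"
  proof
    fix W assume "W \<in> irred_components2 (\<Union>(axis_lines R))"
    then have W: "W \<subseteq> \<Union>(axis_lines R)" "irred_alg2 W"
      and max: "\<And>W'. irred_alg2 W' \<Longrightarrow> W \<subseteq> W' \<Longrightarrow> W' \<subseteq> \<Union>(axis_lines R) \<Longrightarrow> W' = W"
      unfolding irred_components2_def by auto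
    have "\<exists>L\<in>axis_lines R. W \<subseteq> L"
      using R W algebraic2_axis_line[OF axis_line_axis_lines]
      by (intro irred_alg2_subset_Union[OF finite_axis_lines]) auto
    then obtain L where L: "L \<in> axis_lines R" "W \<subseteq> L" by blast
    have "L = W"
      using max[OF irred_alg2_axis_line[OF axis_line_axis_lines[OF L(1)]] L(2)] L(1) by blast
    with L show "W \<in> axis_lines R" by simp
  qed
  show "axis_lines R \<subseteq> irred_components2 (\<Union>(axis_lines R))"
  proof
    fix L assume L: "L \<in> axis_lines R"
    have line: "axis_line L" by (rule axis_line_axis_lines[OF L])
    have "W' = L" if W': "irred_alg2 W'" "L \<subseteq> W'" "W' \<subseteq> \<Union>(axis_lines R)" for W'
    proof -
      obtain L' where L': "L' \<in> axis_lines R" "(\<exists>p. W' = {p}) \<or> W' = L'"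
        by (rule irred_subset_Union_axis_lines[OF R W'(1,3)])
      have "infinite W'" using W'(2) infinite_axis_line[OF line] finite_subset by blast
      then have "W' = L'" using L'(2) by auto
      then show ?thesis
        using axis_line_subset_imp_eq[OF line axis_line_axis_lines[OF L'(1)]] W'(2) by simp
    qed
    then show "L \<in> irred_components2 (\<Union>(axis_lines R))"
      unfolding irred_components2_def using L irred_alg2_axis_line[OF line] by blast
  qed
qed

lemma algebraic2_Union_axis_lines: "finite R \<Longrightarrow> algebraic2 (\<Union>(axis_lines R))"
  using algebraic2_axis_line[OF axis_line_axis_lines] by (intro algebraic2_Union finite_axis_lines)

lemma var_deg2_Union_axis_lines_le:
  assumes "finite R"
  shows "var_deg2 (\<Union>(axis_lines R)) \<le> 2 * card R"
proof -
  have "var_deg2 (\<Union>(axis_lines R)) = (\<Sum>L\<in>axis_lines R. irred_deg2 L)"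
    unfolding var_deg2_def irred_components2_Union_axis_lines[OF assms] ..
  also have "\<dots> = card (axis_lines R)"
    using irred_deg2_axis_line axis_line_axis_lines by simp
  also have "\<dots> \<le> card (vline ` R) + card (hline ` R)"
    unfolding axis_lines_def by (rule card_Un_le)
  also have "\<dots> \<le> 2 * card R"
    using card_image_le[OF assms, of vline] card_image_le[OF assms, of hline] by simp
  finally show ?thesis .
qed

lemma alg_dim2_Union_axis_lines:
  assumes "finite R" and "r \<in> R"
  shows "alg_dim2 (\<Union>(axis_lines R)) = 1"
proof (rule alg_dim2_eq_1)
  show "(\<exists>p. W = {p}) \<or> axis_line W" if "irred_alg2 W" "W \<subseteq> \<Union>(axis_lines R)" for W
    using irred_subset_Union_axis_lines[OF assms(1) that] axis_line_axis_lines by metis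
  show "axis_line (vline r)" by (auto simp: axis_line_def)
  show "vline r \<subseteq> \<Union>(axis_lines R)" using assms(2) by (auto simp: axis_lines_def)
qed

text \<open>The point \<open>0\<close> is added to \<open>R\<close> so that \<open>\<Y>\<^sub>1\<close> is a curve even when \<open>R\<close> is empty.\<close>

theorem lemma3p11:
  "\<exists>C::real. \<forall>(F::poly3) d.
     irreducible F \<and> total_degree3 F = d \<and>
     dx3 F \<noteq> 0 \<and> dy3 F \<noteq> 0 \<and> dz3 F \<noteq> 0 \<longrightarrow>
     (\<exists>Y. algebraic2 Y \<and> alg_dim2 Y = 1 \<and> real (var_deg2 Y) \<le> C * real d ^ 2 \<and>
          Rset F \<times> Rset F \<subseteq> Y \<and>
          (\<forall>y1 y2. (y1, y2) \<notin> Y \<longrightarrow> \<not> contains_axis_parallel_line (gamma F y1 y2)))"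
proof (intro exI[of _ 10] allI impI, elim conjE)
  fix F :: poly3 and d :: nat
  assume irr: "irreducible F" and d: "total_degree3 F = d" and dx: "dx3 F \<noteq> 0" and dz: "dz3 F \<noteq> 0"
  define R where "R = insert 0 (Rset F)"
  have R: "finite R" "card R \<le> 4 * d ^ 2 + 1"
    using finite_Rset[OF irr dx dz] d by (simp_all add: R_def card_insert_if)
  have "1 \<le> d" using degree_pos_if_dx3_nonzero[OF dx] degree_le_total_degree3[of F] d by simp
  then have "1 \<le> d ^ 2" by simp
  then have "var_deg2 (\<Union>(axis_lines R)) \<le> 10 * d ^ 2"
    using var_deg2_Union_axis_lines_le[OF R(1)] R(2) by linarith
  then have "real (var_deg2 (\<Union>(axis_lines R))) \<le> 10 * real d ^ 2"
    by (metis of_nat_le_iff of_nat_mult of_nat_numeral of_nat_power)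
  moreover have "Rset F \<times> Rset F \<subseteq> \<Union>(axis_lines R)"
    using mem_Union_axis_lines[of _ _ R] by (auto simp: R_def)
  moreover have "\<not> contains_axis_parallel_line (gamma F y1 y2)" if "(y1, y2) \<notin> \<Union>(axis_lines R)" for y1 y2
    using that mem_Union_axis_lines[of y1 y2 R] by (intro no_axis_parallel_line_in_gamma) (auto simp: R_def)
  ultimately show "\<exists>Y. algebraic2 Y \<and> alg_dim2 Y = 1 \<and> real (var_deg2 Y) \<le> 10 * real d ^ 2 \<and>
      Rset F \<times> Rset F \<subseteq> Y \<and>
      (\<forall>y1 y2. (y1, y2) \<notin> Y \<longrightarrow> \<not> contains_axis_parallel_line (gamma F y1 y2))"
    using algebraic2_Union_axis_lines[OF R(1)] alg_dim2_Union_axis_lines[OF R(1), of 0]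
    by (auto simp: R_def)
qed

end
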